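(* Let $R$ and $S$ be finite fields. If $\Gamma(Tr(R))\cong\Gamma(Tr(S))$ as graphs, then $R\cong S$.
   Context: For a noncommutative ring $A$ with identity and center $Z(A)$, the commuting graph $\Gamma(A)$ is the simple graph with vertex set $A\setminus Z(A)$, in which two distinct vertices $a,b$ are adjacent iff $ab=ba$. $Tr(R)$ denotes the ring of all $2\times 2$ upper triangular matrices over $R$. *)

theory Defs
  imports "HOL-Analysis.Finite_Cartesian_Product" "HOL-Library.Numeral_Type"
begin

text \<open>The ring Tr(R) of 2x2 upper triangular matrices over R, as a subset of all 2x2 matrices
  (rows/columns indexed by the type 2, entry (2,1) is the lower-left entry).\<close>
definition upper_tri :: "(('a::comm_ring_1) ^ 2 ^ 2) set" where
  "upper_tri = {M. M $ 2 $ 1 = 0}"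

definition ring_center :: "(('a::comm_ring_1) ^ 2 ^ 2) set \<Rightarrow> ('a ^ 2 ^ 2) set" where
  "ring_center A = {a \<in> A. \<forall>b \<in> A. a ** b = b ** a}"

definition cg_vertices :: "(('a::comm_ring_1) ^ 2 ^ 2) set \<Rightarrow> ('a ^ 2 ^ 2) set" where
  "cg_vertices A = A - ring_center A"

definition cg_adj :: "(('a::comm_ring_1) ^ 2 ^ 2) set \<Rightarrow> 'a ^ 2 ^ 2 \<Rightarrow> 'a ^ 2 ^ 2 \<Rightarrow> bool" where
  "cg_adj A x y \<longleftrightarrow> x \<in> cg_vertices A \<and> y \<in> cg_vertices A \<and> x \<noteq> y \<and> x ** y = y ** x"

definition commuting_graph_iso ::
  "(('a::comm_ring_1) ^ 2 ^ 2) set \<Rightarrow> (('b::comm_ring_1) ^ 2 ^ 2) set \<Rightarrow> bool" where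
  "commuting_graph_iso A B \<longleftrightarrow>
     (\<exists>f. bij_betw f (cg_vertices A) (cg_vertices B) \<and>
          (\<forall>x \<in> cg_vertices A. \<forall>y \<in> cg_vertices A. cg_adj A x y \<longleftrightarrow> cg_adj B (f x) (f y)))"

definition ring_isomorphic :: "'a::ring_1 itself \<Rightarrow> 'b::ring_1 itself \<Rightarrow> bool" where
  "ring_isomorphic _ _ \<longleftrightarrow>
     (\<exists>f :: 'a \<Rightarrow> 'b. bij f \<and> (\<forall>x y. f (x + y) = f x + f y) \<and> (\<forall>x y. f (x * y) = f x * f y)
        \<and> f 1 = 1)"

end

theory Submission
  imports Defs "HOL-Analysis.Cartesian_Space" "HOL-Algebra.Multiplicative_Group"
    "HOL-Algebra.Exponent" "HOL-Number_Theory.Residues" "HOL-Computational_Algebra.Polynomial"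
begin

text \<open>
  For a finite field \<open>F\<close> with \<open>q\<close> elements, \<open>Tr(F)\<close> has \<open>q^3\<close> elements and its centre
  consists of the \<open>q\<close> scalar matrices, so the commuting graph has \<open>q^3 - q\<close> vertices. Since
  \<open>q \<mapsto> q^3 - q\<close> is injective, isomorphic commuting graphs force \<open>|R| = |S|\<close>, and it remains to
  show that finite fields of equal order are isomorphic.

  Both fields then have the same characteristic \<open>p\<close>, because the order of a finite field is a
  power of its characteristic. Let \<open>\<alpha>\<close> generate the multiplicative group of \<open>R\<close> and let \<open>m\<close> be a
  monic integer polynomial of least degree with \<open>m(\<alpha>) = 0\<close>. Every integer polynomial vanishing at
  \<open>\<alpha>\<close> is a multiple of \<open>m\<close> modulo \<open>p\<close>; in particular \<open>m\<close> divides \<open>X^q - X\<close>, which vanishes on all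
  of \<open>S\<close>, so \<open>m\<close> has a root \<open>\<beta>\<close> in \<open>S\<close>. Then \<open>g(\<alpha>) \<mapsto> g(\<beta>)\<close> is a well-defined ring
  homomorphism \<open>R \<rightarrow> S\<close>, injective since \<open>R\<close> is a field and hence bijective.
\<close>

definition tri_mat :: "'a::comm_ring_1 \<Rightarrow> 'a \<Rightarrow> 'a \<Rightarrow> 'a^2^2" where
  "tri_mat a b d = (\<chi> i j. if i = 1 then (if j = 1 then a else b) else (if j = 1 then 0 else d))"

lemma tri_mat_nth [simp]:
  "tri_mat a b d $ 1 $ 1 = a" "tri_mat a b d $ 1 $ 2 = b"
  "tri_mat a b d $ 2 $ 1 = 0" "tri_mat a b d $ 2 $ 2 = d"
  by (simp_all add: tri_mat_def)

lemma tri_mat_eq_iff: "tri_mat a b d = tri_mat a' b' d' \<longleftrightarrow> a = a' \<and> b = b' \<and> d = d'"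
  by (simp add: tri_mat_def vec_eq_iff forall_2)

lemma tri_mat_mult:
  "tri_mat a b d ** tri_mat a' b' d' = tri_mat (a * a') (a * b' + b * d') (d * d')"
  by (simp add: matrix_matrix_mult_def vec_eq_iff forall_2 sum_2)

lemma upper_tri_eq_range_tri_mat:
  "(upper_tri :: ('a::comm_ring_1^2^2) set) = range (\<lambda>(a, b, d). tri_mat a b d)"
proof (intro Set.set_eqI iffI)
  fix M :: "'a^2^2"
  assume "M \<in> upper_tri"
  then have "M = tri_mat (M$1$1) (M$1$2) (M$2$2)"
    by (simp add: upper_tri_def vec_eq_iff forall_2)
  then show "M \<in> range (\<lambda>(a, b, d). tri_mat a b d)"
    by (auto intro!: image_eqI[of _ _ "(M$1$1, M$1$2, M$2$2)"])
qed (auto simp: upper_tri_def)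

lemma inj_tri_mat: "inj (\<lambda>(a, b, d). tri_mat a b d)"
  by (auto simp: inj_def tri_mat_eq_iff)

lemma ring_center_upper_tri:
  "ring_center (upper_tri :: ('a::comm_ring_1^2^2) set) = range (\<lambda>c. tri_mat c 0 c)"
proof (intro Set.set_eqI iffI)
  fix M :: "'a^2^2"
  assume M: "M \<in> ring_center upper_tri"
  then obtain a b d where M_eq: "M = tri_mat a b d"
    by (auto simp: ring_center_def upper_tri_eq_range_tri_mat)
  have "M ** tri_mat 1 0 0 = tri_mat 1 0 0 ** M" "M ** tri_mat 0 1 0 = tri_mat 0 1 0 ** M"
    using M by (auto simp: ring_center_def upper_tri_eq_range_tri_mat)
  then have "b = 0" "a = d"
    by (simp_all add: M_eq tri_mat_mult tri_mat_eq_iff)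
  with M_eq show "M \<in> range (\<lambda>c. tri_mat c 0 c)" by auto
next
  fix M :: "'a^2^2"
  assume "M \<in> range (\<lambda>c. tri_mat c 0 c)"
  then obtain c where M_eq: "M = tri_mat c 0 c" by auto
  then have "M \<in> upper_tri" by (simp add: upper_tri_def)
  with M_eq show "M \<in> ring_center upper_tri"
    by (auto simp: ring_center_def upper_tri_eq_range_tri_mat tri_mat_mult tri_mat_eq_iff
        algebra_simps)
qed

lemma card_cg_vertices_upper_tri:
  "card (cg_vertices (upper_tri :: ('a::{comm_ring_1,finite}^2^2) set)) = CARD('a)^3 - CARD('a)"
proof -
  have "card (upper_tri :: ('a^2^2) set) = CARD('a \<times> 'a \<times> 'a)"
    by (simp add: upper_tri_eq_range_tri_mat card_image inj_tri_mat)
  moreover have "card (ring_center (upper_tri :: ('a^2^2) set)) = CARD('a)"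
    by (simp add: ring_center_upper_tri card_image inj_on_def tri_mat_eq_iff)
  moreover have "ring_center (upper_tri :: ('a^2^2) set) \<subseteq> upper_tri"
    by (auto simp: ring_center_def)
  ultimately show ?thesis
    by (simp add: cg_vertices_def card_Diff_subset finite_subset power3_eq_cube)
qed

lemma cube_minus_self_strict_mono:
  fixes q r :: nat
  assumes "0 < q" "q < r"
  shows "q^3 - q < r^3 - r"
proof -
  have "q^3 - q = (q - 1) * q * (q + 1)" "r^3 - r = (r - 1) * r * (r + 1)"
    by (cases q; cases r; simp add: power3_eq_cube algebra_simps)+
  moreover have "(q - 1) * q * (q + 1) < (r - 1) * r * (r + 1)"
    using assms by (intro mult_strict_mono) auto
  ultimately show ?thesis by simp
qed

definition ring_of_type :: "'a::ring_1 ring" where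
  "ring_of_type = \<lparr>carrier = UNIV, mult = (*), one = 1, zero = 0, add = (+)\<rparr>"

lemma field_ring_of_type: "field (ring_of_type :: 'a::field ring)"
proof -
  have "\<exists>y. x + y = 0" for x :: 'a
    by (rule exI[of _ "- x"]) simp
  moreover have "x \<noteq> 0 \<Longrightarrow> \<exists>y. x * y = 1" for x :: 'a
    by (rule exI[of _ "inverse x"]) simp
  ultimately show ?thesis
    unfolding ring_of_type_def
    by unfold_locales (auto simp: algebra_simps Units_def)
qed

lemma ring_of_type_simps [simp]:
  "carrier ring_of_type = UNIV" "\<zero>\<^bsub>ring_of_type\<^esub> = 0" "\<one>\<^bsub>ring_of_type\<^esub> = 1"
  "x \<otimes>\<^bsub>ring_of_type\<^esub> y = x * y" "x [^]\<^bsub>ring_of_type\<^esub> n = x ^ n"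
  for x y :: "'a::ring_1"
  by (simp_all add: ring_of_type_def) (induction n, simp_all add: ring_of_type_def power_commutes)

lemma finite_field_pow_card:
  fixes x :: "'a::{field,finite}"
  shows "x ^ CARD('a) = x"
proof (cases "x = 0")
  case False
  interpret K: field "ring_of_type :: 'a ring"
    by (rule field_ring_of_type)
  have "Coset.order (mult_of (ring_of_type :: 'a ring)) = CARD('a) - 1"
    by (simp add: K.order_mult_of Coset.order_def)
  with False group.pow_order_eq_1[OF K.field_mult_group, of x]
  have "x ^ (CARD('a) - 1) = 1"
    by (simp add: nat_pow_mult_of)
  then have "x * x ^ (CARD('a) - 1) = x" by simp
  then show ?thesis
    by (metis finite_UNIV_card_ge_0 finite power_eq_if neq0_conv)
qed simp

lemma finite_field_primitive_element:
  obtains \<alpha> :: "'a::{field,finite}" where "\<And>x. x \<noteq> 0 \<Longrightarrow> \<exists>i. x = \<alpha> ^ i"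
proof -
  interpret K: field "ring_of_type :: 'a ring"
    by (rule field_ring_of_type)
  obtain \<alpha> where "carrier (mult_of (ring_of_type :: 'a ring)) =
      {\<alpha> [^]\<^bsub>ring_of_type\<^esub> i | i::nat. i \<in> UNIV}"
    using K.finite_field_mult_group_has_gen by auto
  then have "x \<noteq> 0 \<Longrightarrow> \<exists>i. x = \<alpha> ^ i" for x
    by auto
  then show thesis by (rule that)
qed

lemma prime_CHAR_finite_field: "prime CHAR('a::{field,finite})"
  using prime_CHAR_semidom finite_imp_CHAR_pos[OF finite_class.finite_UNIV] by blast

lemma poly_eq_0_if_vanishes_everywhere:
  fixes P :: "'a::{idom,finite} poly"
  assumes "degree P < CARD('a)" and "\<And>x. poly P x = 0"
  shows "P = 0"
proof (rule ccontr)
  assume "P \<noteq> 0"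
  then have "card {x. poly P x = 0} \<le> degree P"
    by (rule card_poly_roots_bound)
  with assms show False by simp
qed

text \<open>If \<open>q = p^a m\<close> with \<open>p \<nmid> m\<close> and \<open>m > 1\<close>, the polynomial \<open>(X + 1)^q - X^q - 1\<close> vanishes on the
  whole field but has degree \<open>< q\<close>, so \<open>p\<close> divides every \<open>q choose i\<close> with \<open>0 < i < q\<close>; yet \<open>p\<close> does
  not divide \<open>q choose p^a\<close>.\<close>
lemma card_finite_field_eq_CHAR_power:
  obtains k where "CARD('a::{field,finite}) = CHAR('a) ^ k"
proof -
  define p q where "p = CHAR('a)" and "q = CARD('a)"
  have p: "prime p" and q: "q > 0"
    by (simp_all add: p_def q_def prime_CHAR_finite_field)
  define a where "a = multiplicity p q"
  obtain m where q_eq: "q = p ^ a * m" and "\<not> p dvd m"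
    using multiplicity_decompose'[of q p] q p unfolding a_def by (metis neq0_conv not_prime_unit)
  have "p ^ a = q"
  proof (rule ccontr)
    assume "p ^ a \<noteq> q"
    with q_eq q have "m > 1" by (cases "m = 0 \<or> m = 1") auto
    with q_eq p have between: "0 < p ^ a" "p ^ a < q"
      by (simp_all add: prime_gt_0_nat)
    define P :: "'a poly" where "P = [:1, 1:] ^ q - monom 1 q - 1"
    have coeff_P: "coeff P i = of_nat (q choose i)" if "0 < i" "i < q" for i
      using that by (simp add: P_def coeff_linear_poly_power)
    have "P = 0"
    proof (rule poly_eq_0_if_vanishes_everywhere)
      have "degree P \<le> q - 1"
      proof (rule degree_le, intro allI impI)
        fix i
        assume "q - 1 < i"
        moreover have "degree ([:1, 1::'a:] ^ q) \<le> q"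
          using degree_power_le[of "[:1, 1::'a:]" q] by simp
        ultimately show "coeff P i = 0"
          using q by (cases "i = q") (auto simp: P_def coeff_linear_power coeff_eq_0)
      qed
      with q show "degree P < CARD('a)"
        unfolding q_def[symmetric] by linarith
      show "poly P x = 0" for x
        by (simp add: P_def poly_monom finite_field_pow_card[of x, folded q_def]
            finite_field_pow_card[of "1 + x", folded q_def])
    qed
    then have "p dvd (q choose p ^ a)"
      using coeff_P[OF between] by (simp add: p_def of_nat_eq_0_iff_char_dvd)
    moreover have "multiplicity p (q choose p ^ a) = 0"
      using const_p_fac[of m p a] \<open>m > 1\<close> p \<open>\<not> p dvd m\<close>
      by (simp add: q_eq not_dvd_imp_multiplicity_0)
    ultimately show False
      using between prime_gt_1_nat[OF p] multiplicity_eq_zero_iff[of "q choose p ^ a" p]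
      by auto
  qed
  then show thesis
    by (intro that[of a]) (simp add: p_def q_def)
qed

lemma CHAR_eq_of_card_eq:
  assumes "CARD('a::{field,finite}) = CARD('b::{field,finite})"
  shows "CHAR('a) = CHAR('b)"
proof -
  obtain k where "CARD('a) = CHAR('a) ^ k"
    by (rule card_finite_field_eq_CHAR_power)
  with assms CHAR_dvd_CARD[where 'a='b] have "CHAR('b) dvd CHAR('a) ^ k"
    by simp
  then have "CHAR('b) dvd CHAR('a)"
    using prime_CHAR_finite_field prime_dvd_power by blast
  then show ?thesis
    using primes_dvd_imp_eq prime_CHAR_finite_field by metis
qed

lemma map_poly_of_int_add [simp]:
  "map_poly (of_int :: int \<Rightarrow> 'a::comm_ring_1) (p + q) = map_poly of_int p + map_poly of_int q"
  by (intro poly_eqI) (simp add: coeff_map_poly)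

lemma map_poly_of_int_diff [simp]:
  "map_poly (of_int :: int \<Rightarrow> 'a::comm_ring_1) (p - q) = map_poly of_int p - map_poly of_int q"
  by (intro poly_eqI) (simp add: coeff_map_poly)

lemma map_poly_of_int_mult [simp]:
  "map_poly (of_int :: int \<Rightarrow> 'a::comm_ring_1) (p * q) = map_poly of_int p * map_poly of_int q"
  by (intro poly_eqI) (simp add: coeff_map_poly coeff_mult)

lemma map_poly_of_int_eq_0_iff:
  "map_poly (of_int :: int \<Rightarrow> 'a::comm_ring_1) p = 0 \<longleftrightarrow> (\<forall>i. int CHAR('a) dvd coeff p i)"
  by (simp add: poly_eq_iff coeff_map_poly of_int_eq_0_iff_char_dvd)

lemma one_less_card_field: "1 < CARD('a::{field,finite})"
proof -
  have "card {0, 1::'a} \<le> CARD('a)"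
    by (rule card_mono) simp_all
  then show ?thesis by simp
qed

lemma
  fixes n k :: nat
  assumes "k < n"
  shows degree_monom_minus_monom: "degree (monom 1 n - monom (1::'a::comm_ring_1) k) = n"
    and lead_coeff_monom_minus_monom: "lead_coeff (monom 1 n - monom (1::'a::comm_ring_1) k) = 1"
proof -
  have "degree (monom 1 n + - monom (1::'a) k) = n"
    using assms by (subst degree_add_eq_left) (simp_all add: degree_monom_eq)
  then show "degree (monom 1 n - monom (1::'a) k) = n" by simp
  with assms show "lead_coeff (monom 1 n - monom (1::'a) k) = 1" by simp
qed

lemma int_poly_rescale_monic:
  fixes r :: "int poly"
  assumes "CHAR('a::field) > 0" and nonzero: "map_poly (of_int :: int \<Rightarrow> 'a) r \<noteq> 0"
  obtains t c where "lead_coeff t = 1" and "degree t = degree (map_poly (of_int :: int \<Rightarrow> 'a) r)"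
    and "map_poly (of_int :: int \<Rightarrow> 'a) t = smult (of_int c) (map_poly of_int r)"
proof -
  define R where "R = map_poly (of_int :: int \<Rightarrow> 'a) r"
  define d where "d = degree R"
  have p: "prime (int CHAR('a))"
    using prime_CHAR_semidom[OF assms(1)] by simp
  have "of_int (coeff r d) = lead_coeff R"
    by (simp add: R_def d_def coeff_map_poly)
  then have "of_int (coeff r d) \<noteq> (0::'a)"
    using nonzero by (simp flip: R_def)
  then have "\<not> int CHAR('a) dvd coeff r d"
    by (simp add: of_int_eq_0_iff_char_dvd)
  then have "coprime (coeff r d) (int CHAR('a))"
    using p by (simp add: prime_imp_coprime ac_simps)
  then obtain c where "[coeff r d * c = 1] (mod int CHAR('a))"
    using cong_solve_coprime_int by blast
  then have "of_int (coeff r d * c) = (of_int 1 :: 'a)"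
    by (simp only: of_int_eq_iff_cong_CHAR)
  then have c: "of_int c * of_int (coeff r d) = (1::'a)"
    by (simp add: ac_simps)
  define t where "t = Poly (map (\<lambda>i. if i = d then 1 else c * coeff r i) [0..<Suc d])"
  have coeff_t: "coeff t i = (if i < d then c * coeff r i else if i = d then 1 else 0)" for i
    by (auto simp: t_def nth_default_def nth_append simp del: upt_Suc)
  have "degree t = d"
    by (intro antisym degree_le le_degree) (simp_all add: coeff_t)
  moreover from this have "lead_coeff t = 1"
    by (simp add: coeff_t)
  moreover have "map_poly of_int t = smult (of_int c) R"
  proof (rule poly_eqI)
    fix i
    have "coeff R i = 0" if "i > d"
      using that by (simp add: d_def coeff_eq_0)
    then show "coeff (map_poly of_int t) i = coeff (smult (of_int c) R) i"
      using c by (auto simp: coeff_map_poly coeff_t R_def)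
  qed
  ultimately show thesis
    using that by (simp add: d_def R_def)
qed

lemma int_poly_reduces_to_0_below_least_annihilator:
  fixes \<alpha> :: "'a::{field,finite}"
  assumes least: "\<And>t. lead_coeff t = 1 \<Longrightarrow> poly (map_poly of_int t) \<alpha> = 0 \<Longrightarrow> degree m \<le> degree t"
    and r_root: "poly (map_poly of_int r) \<alpha> = 0" and r_deg: "degree r < degree m"
  shows "map_poly (of_int :: int \<Rightarrow> 'a) r = 0"
proof (rule ccontr)
  assume nonzero: "map_poly (of_int :: int \<Rightarrow> 'a) r \<noteq> 0"
  then obtain t c where t_monic: "lead_coeff t = 1"
    and deg_t: "degree t = degree (map_poly (of_int :: int \<Rightarrow> 'a) r)"
    and t: "map_poly (of_int :: int \<Rightarrow> 'a) t = smult (of_int c) (map_poly of_int r)"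
    using int_poly_rescale_monic finite_imp_CHAR_pos[OF finite_class.finite_UNIV] by blast
  from t r_root have "poly (map_poly of_int t) \<alpha> = 0"
    by simp
  with t_monic have "degree m \<le> degree t"
    by (rule least)
  moreover have "degree t < degree m"
    using deg_t r_deg map_poly_degree_leq[of "of_int :: int \<Rightarrow> 'a" r] by simp
  ultimately show False
    by simp
qed

lemma int_poly_annihilator:
  fixes \<alpha> :: "'a::{field,finite}"
  obtains m :: "int poly" where "lead_coeff m = 1" and "poly (map_poly of_int m) \<alpha> = 0"
    and "\<And>g. poly (map_poly of_int g) \<alpha> = 0 \<Longrightarrow> \<exists>u. map_poly (of_int :: int \<Rightarrow> 'a) (g - m * u) = 0"
proof -
  define annihilates where "annihilates m \<longleftrightarrow> lead_coeff m = 1 \<and> poly (map_poly of_int m) \<alpha> = 0"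
    for m :: "int poly"
  have "annihilates (monom 1 CARD('a) - monom 1 1)"
    using lead_coeff_monom_minus_monom[OF one_less_card_field[where 'a='a], where 'a=int]
    by (simp add: annihilates_def map_poly_monom poly_monom finite_field_pow_card)
  then obtain m where m: "annihilates m" and least: "\<And>t. annihilates t \<Longrightarrow> degree m \<le> degree t"
    using ex_has_least_nat[where m=degree] by metis
  have "\<exists>u. map_poly (of_int :: int \<Rightarrow> 'a) (g - m * u) = 0"
    if g: "poly (map_poly of_int g) \<alpha> = 0" for g
  proof -
    obtain u r where div: "pseudo_divmod g m = (u, r)"
      by (cases "pseudo_divmod g m")
    have "m \<noteq> 0" using m by (auto simp: annihilates_def)
    with div m have g_eq: "g = m * u + r" and r: "r = 0 \<or> degree r < degree m"
      using pseudo_divmod[of m g u r] by (simp_all add: annihilates_def)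
    have "poly (map_poly of_int r) \<alpha> = (0::'a)"
      using g m by (simp add: g_eq annihilates_def)
    with r have "map_poly (of_int :: int \<Rightarrow> 'a) r = 0"
      using int_poly_reduces_to_0_below_least_annihilator[of \<alpha> m r] least
      by (auto simp: annihilates_def)
    then show ?thesis
      by (auto simp: g_eq)
  qed
  with m show thesis
    using that by (auto simp: annihilates_def)
qed

lemma poly_dvd_X_pow_card_minus_X_has_root:
  fixes P :: "'a::{field,finite} poly"
  assumes "P dvd monom 1 CARD('a) - monom 1 1" and "degree P > 0"
  obtains x where "poly P x = 0"
proof (rule ccontr)
  assume no_root: "\<not> thesis"
  obtain U where U: "monom 1 CARD('a) - monom 1 1 = P * U"
    using assms(1) by blast
  have card: "1 < CARD('a)"
    by (rule one_less_card_field)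
  then have "P * U \<noteq> 0"
    by (metis U lead_coeff_monom_minus_monom one_neq_zero coeff_0)
  then have "degree (P * U) = degree P + degree U"
    by (intro degree_mult_eq) auto
  with card assms(2) have "degree U < CARD('a)"
    by (simp flip: U add: degree_monom_minus_monom)
  moreover have "poly U x = 0" for x
  proof -
    have "poly P x * poly U x = 0"
      using U[THEN arg_cong, of "\<lambda>P. poly P x"]
      by (simp add: poly_monom finite_field_pow_card)
    with no_root that show ?thesis by auto
  qed
  ultimately have "U = 0"
    by (rule poly_eq_0_if_vanishes_everywhere)
  with \<open>P * U \<noteq> 0\<close> show False by simp
qed

lemma ring_hom_from_int_poly_kernel:
  fixes \<alpha> :: "'a::comm_ring_1" and \<beta> :: "'b::comm_ring_1"
  assumes gen: "\<And>x. \<exists>g. poly (map_poly of_int g) \<alpha> = x"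
    and ker: "\<And>g. poly (map_poly of_int g) \<alpha> = 0 \<Longrightarrow> poly (map_poly of_int g) \<beta> = 0"
  obtains \<phi> :: "'a \<Rightarrow> 'b" where "\<And>x y. \<phi> (x + y) = \<phi> x + \<phi> y"
    and "\<And>x y. \<phi> (x * y) = \<phi> x * \<phi> y" and "\<phi> 1 = 1"
proof -
  define \<phi> where "\<phi> x = poly (map_poly of_int (SOME g. poly (map_poly of_int g) \<alpha> = x)) \<beta>" for x
  have \<phi>_poly: "\<phi> (poly (map_poly of_int g) \<alpha>) = poly (map_poly of_int g) \<beta>" for g
  proof -
    define h where "h = (SOME h. poly (map_poly of_int h) \<alpha> = poly (map_poly of_int g) \<alpha>)"
    have "poly (map_poly of_int h) \<alpha> = poly (map_poly of_int g) \<alpha>"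
      unfolding h_def by (rule someI) simp
    then have "poly (map_poly of_int (h - g)) \<beta> = 0"
      by (intro ker) simp
    then show ?thesis
      by (simp add: \<phi>_def flip: h_def)
  qed
  show thesis
  proof
    fix x y
    obtain g h where "poly (map_poly of_int g) \<alpha> = x" "poly (map_poly of_int h) \<alpha> = y"
      using gen by blast
    then show "\<phi> (x + y) = \<phi> x + \<phi> y" and "\<phi> (x * y) = \<phi> x * \<phi> y"
      using \<phi>_poly[of "g + h"] \<phi>_poly[of "g * h"] by (auto simp: \<phi>_poly)
  next
    show "\<phi> 1 = 1"
      using \<phi>_poly[of 1] by simp
  qed
qed

lemma bij_field_hom_card_eq:
  fixes \<phi> :: "'a::{field,finite} \<Rightarrow> 'b::{field,finite}"
  assumes add: "\<And>x y. \<phi> (x + y) = \<phi> x + \<phi> y" and mult: "\<And>x y. \<phi> (x * y) = \<phi> x * \<phi> y"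
    and one: "\<phi> 1 = 1" and card: "CARD('a) = CARD('b)"
  shows "bij \<phi>"
proof -
  have "\<phi> z \<noteq> 0" if "z \<noteq> 0" for z
  proof
    assume "\<phi> z = 0"
    then have "\<phi> (z * inverse z) = 0" by (simp add: mult)
    with that one show False by simp
  qed
  moreover have "\<phi> x = \<phi> (x - y) + \<phi> y" for x y
    by (simp flip: add)
  ultimately have "inj \<phi>"
    by (intro injI) (metis add_cancel_right_left right_minus_eq)
  moreover from this have "range \<phi> = UNIV"
    using card by (simp add: card_subset_eq card_image)
  ultimately show ?thesis
    by (simp add: bij_def)
qed

text \<open>The counterpart \<open>\<beta>\<close> of \<open>\<alpha>\<close> is a root of its least monic annihilator, which divides
  \<open>X^q - X\<close> modulo the common characteristic.\<close>
lemma int_poly_relations_transfer: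
  fixes \<alpha> :: "'r::{field,finite}"
  assumes card: "CARD('r) = CARD('s::{field,finite})"
  obtains \<beta> :: "'s::{field,finite}"
    where "\<And>g. poly (map_poly of_int g) \<alpha> = 0 \<Longrightarrow> poly (map_poly of_int g) \<beta> = 0"
proof -
  obtain m :: "int poly"
    where m_monic: "lead_coeff m = 1" and m_root: "poly (map_poly of_int m) \<alpha> = 0"
      and m_dvd: "\<And>g. poly (map_poly of_int g) \<alpha> = 0 \<Longrightarrow>
        \<exists>u. map_poly (of_int :: int \<Rightarrow> 'r) (g - m * u) = 0"
    using int_poly_annihilator[of \<alpha>] by blast
  have char: "CHAR('r) = CHAR('s)"
    using card by (rule CHAR_eq_of_card_eq)
  have m_dvd': "\<exists>u. map_poly (of_int :: int \<Rightarrow> 's) g = map_poly of_int m * map_poly of_int u"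
    if g_root: "poly (map_poly of_int g) \<alpha> = 0" for g
  proof -
    obtain u where "map_poly (of_int :: int \<Rightarrow> 'r) (g - m * u) = 0"
      using m_dvd[OF g_root] by blast
    then have "map_poly (of_int :: int \<Rightarrow> 's) (g - m * u) = 0"
      using char by (metis map_poly_of_int_eq_0_iff)
    then show ?thesis
      by (intro exI[of _ u]) simp
  qed
  define X_pow_minus_X :: "int poly" where "X_pow_minus_X = monom 1 CARD('r) - monom 1 1"
  have "poly (map_poly of_int X_pow_minus_X) \<alpha> = 0"
    by (simp add: X_pow_minus_X_def map_poly_monom poly_monom finite_field_pow_card)
  then have "map_poly (of_int :: int \<Rightarrow> 's) m dvd monom 1 CARD('s) - monom 1 1"
    using m_dvd'[of X_pow_minus_X] card by (auto simp: X_pow_minus_X_def map_poly_monom)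
  moreover have "degree (map_poly (of_int :: int \<Rightarrow> 's) m) > 0"
  proof -
    have "degree m \<noteq> 0"
    proof
      assume "degree m = 0"
      then have "m = 1"
        using m_monic degree_0_id[of m] by (simp add: pCons_one)
      with m_root show False by simp
    qed
    then show ?thesis
      using m_monic by (simp add: map_poly_degree_eq)
  qed
  ultimately obtain \<beta> :: 's where \<beta>: "poly (map_poly of_int m) \<beta> = 0"
    by (rule poly_dvd_X_pow_card_minus_X_has_root)
  show thesis
  proof (rule that)
    fix g
    assume "poly (map_poly of_int g) \<alpha> = 0"
    then obtain u where "map_poly (of_int :: int \<Rightarrow> 's) g = map_poly of_int m * map_poly of_int u"
      using m_dvd' by blast
    with \<beta> show "poly (map_poly of_int g) \<beta> = 0"
      by simp
  qed
qed

theorem finite_fields_isomorphic_if_card_eq: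
  assumes card: "CARD('r::{field,finite}) = CARD('s::{field,finite})"
  shows "ring_isomorphic TYPE('r) TYPE('s)"
proof -
  obtain \<alpha> :: 'r where \<alpha>: "\<And>x. x \<noteq> 0 \<Longrightarrow> \<exists>i. x = \<alpha> ^ i"
    using finite_field_primitive_element by blast
  have gen: "\<exists>g. poly (map_poly of_int g) \<alpha> = x" for x
  proof (cases "x = 0")
    case False
    then obtain i where "x = \<alpha> ^ i"
      using \<alpha> by blast
    then show ?thesis
      by (intro exI[of _ "monom 1 i"]) (simp add: map_poly_monom poly_monom)
  qed (intro exI[of _ 0], simp)
  obtain \<beta> :: 's where "\<And>g. poly (map_poly of_int g) \<alpha> = 0 \<Longrightarrow> poly (map_poly of_int g) \<beta> = 0"
    using int_poly_relations_transfer[OF card] by blast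
  then obtain \<phi> :: "'r \<Rightarrow> 's" where "\<And>x y. \<phi> (x + y) = \<phi> x + \<phi> y"
    and "\<And>x y. \<phi> (x * y) = \<phi> x * \<phi> y" and "\<phi> 1 = 1"
    using ring_hom_from_int_poly_kernel[OF gen] by blast
  moreover from this card have "bij \<phi>"
    by (intro bij_field_hom_card_eq)
  ultimately show ?thesis
    unfolding ring_isomorphic_def by blast
qed

theorem mainTheorem6:
  assumes "commuting_graph_iso (upper_tri :: (('r::{field,finite}) ^ 2 ^ 2) set)
                               (upper_tri :: (('s::{field,finite}) ^ 2 ^ 2) set)"
  shows "ring_isomorphic TYPE('r) TYPE('s)"
proof -
  obtain f where "bij_betw f (cg_vertices (upper_tri :: ('r ^ 2 ^ 2) set))
      (cg_vertices (upper_tri :: ('s ^ 2 ^ 2) set))"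
    using assms unfolding commuting_graph_iso_def by blast
  then have "CARD('r)^3 - CARD('r) = CARD('s)^3 - CARD('s)"
    by (simp add: bij_betw_same_card flip: card_cg_vertices_upper_tri)
  then have "CARD('r) = CARD('s)"
    using cube_minus_self_strict_mono[of "CARD('r)" "CARD('s)"]
      cube_minus_self_strict_mono[of "CARD('s)" "CARD('r)"]
    by (cases "CARD('r)" "CARD('s)" rule: linorder_cases) simp_all
  then show ?thesis
    by (rule finite_fields_isomorphic_if_card_eq)
qed

end
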